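(* Consider the input-delay system $\dot x(t)=f(x(t))+g(x(t))u(t-\tau)$, $\tau>0$, operating in an environment whose state satisfies $e(t+\vartheta)=\Gamma(\vartheta,e(t))$ and $\dot e(t+\vartheta)=\dot\Gamma(\vartheta,e(t),\dot e(t))$ for $\vartheta\in[0,\tau]$. Let $H:X\times E\to\mathbb{R}$ be continuously differentiable, $S_{\rm e}=\{(x,e)\in X\times E:H(x,e)\ge0\}$, and suppose $H$ is an ECBF for the delay system with extended class $\mathcal{K}$ function $\alpha$. Suppose Assumption 2 holds: the initial input history $u_0$ satisfies $(\Psi(\vartheta,x_0,u_0),\Gamma(\vartheta,e_0))\in S_{\rm e}$ for all $\vartheta\in[0,\tau]$. Then any locally Lipschitz continuous controller $u=K(x_{\rm p},e_{\rm p},\dot e_{\rm p})$ with $x_{\rm p}=\Psi(\tau,x,u_t)$, $e_{\rm p}=\Gamma(\tau,e)$, $\dot e_{\rm p}=\dot\Gamma(\tau,e,\dot e)$, satisfying $$\dot H(x_{\rm p},e_{\rm p},\dot e_{\rm p},u)\ge-\alpha(H(x_{\rm p},e_{\rm p}))$$ for all $(x,e)\in S_{\rm e}$, $\dot e\in\mathcal{E}$ and $u_t\in\mathcal{B}$, renders $S_{\rm e}$ forward invariant: $(x_0,e_0)\in S_{\rm e}\Rightarrow(x(t),e(t))\in S_{\rm e}$ for all $t\ge0$.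
   Context: $X\subseteq\mathbb{R}^n$ open connected, $U\subseteq\mathbb{R}^m$, $f,g$ locally Lipschitz, $u$ bounded and continuous a.e., solutions exist uniquely for $t\ge0$. Environment state $e(t)\in E\subseteq\mathbb{R}^l$, continuously differentiable, $\dot e(t)\in\mathcal{E}\subseteq\mathbb{R}^l$, $e(0)=e_0$; $\Gamma:[0,\tau]\times E\to E$, $\dot\Gamma:[0,\tau]\times E\times\mathcal{E}\to\mathcal{E}$ are the maps describing its future. $\mathcal{B}$: functions $[-\tau,0)\to U$ bounded and continuous a.e.; $u_t(\theta)=u(t+\theta)$, $\theta\in[-\tau,0)$. Semi-flow $\Psi(\vartheta,x,u_t)=x+\int_0^\vartheta\big(f(\Psi(\varphi,x,u_t))+g(\Psi(\varphi,x,u_t))u_t(\varphi-\tau)\big)d\varphi$, $\vartheta\in[0,\tau]$. $\dot H(x,e,\dot e,u)=\nabla_xH(x,e)(f(x)+g(x)u)+\nabla_eH(x,e)\dot e$. Extended class $\mathcal{K}$ function: continuous strictly increasing $\alpha:(-a,b)\to\mathbb{R}$, $a,b>0$, $\alpha(0)=0$. Definition: $H$ is an ECBF for the delay system with $\tau>0$ if there is an extended class $\mathcal{K}$ function $\alpha$ such that for all $(x,e)\in S_{\rm e}$, $\dot e\in\mathcal{E}$, $u_t\in\mathcal{B}$: $\sup_{u\in U}\dot H(x_{\rm p},e_{\rm p},\dot e_{\rm p},u)\ge-\alpha(H(x_{\rm p},e_{\rm p}))$ with $x_{\rm p}=\Psi(\tau,x,u_t)$, $e_{\rm p}=\Gamma(\tau,e)$,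 $\dot e_{\rm p}=\dot\Gamma(\tau,e,\dot e)$. *)

theory Defs
  imports "HOL-Analysis.Analysis"
begin

definition locally_lipschitz_on :: "'a::metric_space set \<Rightarrow> ('a \<Rightarrow> 'b::metric_space) \<Rightarrow> bool" where
  "locally_lipschitz_on S F \<longleftrightarrow>
     (\<forall>z\<in>S. \<exists>r>0. \<exists>L. \<forall>y1\<in>ball z r \<inter> S. \<forall>y2\<in>ball z r \<inter> S.
        dist (F y1) (F y2) \<le> L * dist y1 y2)"

definition ext_class_K :: "real \<Rightarrow> real \<Rightarrow> (real \<Rightarrow> real) \<Rightarrow> bool" where
  "ext_class_K a b \<alpha> \<longleftrightarrow> a > 0 \<and> b > 0 \<and> continuous_on {-a<..<b} \<alpha>
      \<and> strict_mono_on {-a<..<b} \<alpha> \<and> \<alpha> 0 = 0"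

definition inputs_B :: "real \<Rightarrow> (real^'m) set \<Rightarrow> (real \<Rightarrow> real^'m) set" where
  "inputs_B \<tau> U = {w. (\<forall>\<theta>\<in>{-\<tau>..<0}. w \<theta> \<in> U) \<and> bounded (w ` {-\<tau>..<0})
      \<and> (AE \<theta> in lborel. \<theta> \<in> {-\<tau>..<0} \<longrightarrow> continuous (at \<theta> within {-\<tau>..<0}) w)}"

definition open_loop_sol ::
  "(real^'n) set \<Rightarrow> (real^'n \<Rightarrow> real^'n) \<Rightarrow> (real^'n \<Rightarrow> real^'m^'n) \<Rightarrow> real
   \<Rightarrow> real^'n \<Rightarrow> (real \<Rightarrow> real^'m) \<Rightarrow> (real \<Rightarrow> real^'n) \<Rightarrow> bool" where
  "open_loop_sol X f g \<tau> x w \<xi> \<longleftrightarrow>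
     (\<forall>s\<in>{0..\<tau>}. \<xi> s \<in> X \<and>
        ((\<lambda>\<phi>. f (\<xi> \<phi>) + g (\<xi> \<phi>) *v w (\<phi> - \<tau>)) has_integral (\<xi> s - x)) {0..s})"

definition Psi ::
  "(real^'n) set \<Rightarrow> (real^'n \<Rightarrow> real^'n) \<Rightarrow> (real^'n \<Rightarrow> real^'m^'n) \<Rightarrow> real
   \<Rightarrow> real \<Rightarrow> real^'n \<Rightarrow> (real \<Rightarrow> real^'m) \<Rightarrow> real^'n" where
  "Psi X f g \<tau> vt x w = (THE y. \<exists>\<xi>. open_loop_sol X f g \<tau> x w \<xi> \<and> \<xi> vt = y)"

definition open_loop_wellposed ::
  "(real^'n) set \<Rightarrow> (real^'m) set \<Rightarrow> (real^'n \<Rightarrow> real^'n) \<Rightarrow> (real^'n \<Rightarrow> real^'m^'n) \<Rightarrow> real \<Rightarrow> bool" where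
  "open_loop_wellposed X U f g \<tau> \<longleftrightarrow>
     (\<forall>x\<in>X. \<forall>w\<in>inputs_B \<tau> U.
        (\<exists>\<xi>. open_loop_sol X f g \<tau> x w \<xi>) \<and>
        (\<forall>\<xi>1 \<xi>2. open_loop_sol X f g \<tau> x w \<xi>1 \<longrightarrow> open_loop_sol X f g \<tau> x w \<xi>2
            \<longrightarrow> (\<forall>s\<in>{0..\<tau>}. \<xi>1 s = \<xi>2 s)))"

definition Hdot ::
  "(real^'n \<Rightarrow> real^'l \<Rightarrow> real^'n) \<Rightarrow> (real^'n \<Rightarrow> real^'l \<Rightarrow> real^'l)
   \<Rightarrow> (real^'n \<Rightarrow> real^'n) \<Rightarrow> (real^'n \<Rightarrow> real^'m^'n)
   \<Rightarrow> real^'n \<Rightarrow> real^'l \<Rightarrow> real^'l \<Rightarrow> real^'m \<Rightarrow> real" where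
  "Hdot Hx He f g x e ed u = Hx x e \<bullet> (f x + g x *v u) + He x e \<bullet> ed"

definition safe_set :: "(real^'n) set \<Rightarrow> (real^'l) set \<Rightarrow> (real^'n \<Rightarrow> real^'l \<Rightarrow> real)
    \<Rightarrow> ((real^'n) \<times> (real^'l)) set" where
  "safe_set X E H = {(x, e). x \<in> X \<and> e \<in> E \<and> H x e \<ge> 0}"

definition is_ECBF ::
  "(real^'n) set \<Rightarrow> (real^'m) set \<Rightarrow> (real^'l) set \<Rightarrow> (real^'l) set
   \<Rightarrow> (real^'n \<Rightarrow> real^'n) \<Rightarrow> (real^'n \<Rightarrow> real^'m^'n) \<Rightarrow> real
   \<Rightarrow> (real \<Rightarrow> real^'l \<Rightarrow> real^'l) \<Rightarrow> (real \<Rightarrow> real^'l \<Rightarrow> real^'l \<Rightarrow> real^'l)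
   \<Rightarrow> (real^'n \<Rightarrow> real^'l \<Rightarrow> real)
   \<Rightarrow> (real^'n \<Rightarrow> real^'l \<Rightarrow> real^'n) \<Rightarrow> (real^'n \<Rightarrow> real^'l \<Rightarrow> real^'l)
   \<Rightarrow> (real \<Rightarrow> real) \<Rightarrow> bool" where
  "is_ECBF X U E Ecal f g \<tau> \<Gamma> \<Gamma>d H Hx He \<alpha> \<longleftrightarrow>
     (\<exists>a b. ext_class_K a b \<alpha>) \<and>
     (\<forall>(x, e)\<in>safe_set X E H. \<forall>ed\<in>Ecal. \<forall>w\<in>inputs_B \<tau> U.
        (let xp = Psi X f g \<tau> \<tau> x w; ep = \<Gamma> \<tau> e; edp = \<Gamma>d \<tau> e ed
         in (SUP u\<in>U. ereal (Hdot Hx He f g xp ep edp u)) \<ge> ereal (- \<alpha> (H xp ep))))"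

definition closed_loop_sol ::
  "(real^'n) set \<Rightarrow> (real^'m) set \<Rightarrow> (real^'l) set \<Rightarrow> (real^'l) set
   \<Rightarrow> (real^'n \<Rightarrow> real^'n) \<Rightarrow> (real^'n \<Rightarrow> real^'m^'n) \<Rightarrow> real
   \<Rightarrow> (real \<Rightarrow> real^'l \<Rightarrow> real^'l) \<Rightarrow> (real \<Rightarrow> real^'l \<Rightarrow> real^'l \<Rightarrow> real^'l)
   \<Rightarrow> (real^'n \<Rightarrow> real^'l \<Rightarrow> real^'l \<Rightarrow> real^'m)
   \<Rightarrow> real^'n \<Rightarrow> real^'l \<Rightarrow> (real \<Rightarrow> real^'m)
   \<Rightarrow> (real \<Rightarrow> real^'n) \<Rightarrow> (real \<Rightarrow> real^'m) \<Rightarrow> (real \<Rightarrow> real^'l) \<Rightarrow> (real \<Rightarrow> real^'l) \<Rightarrow> bool" where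
  "closed_loop_sol X U E Ecal f g \<tau> \<Gamma> \<Gamma>d K x0 e0 u0 x u e ed \<longleftrightarrow>
     (\<forall>\<theta>\<in>{-\<tau>..<0}. u \<theta> = u0 \<theta>) \<and>
     (\<forall>t\<ge>0. x t \<in> X) \<and>
     (\<forall>t\<ge>0. ((\<lambda>s. f (x s) + g (x s) *v u (s - \<tau>)) has_integral (x t - x0)) {0..t}) \<and>
     (\<forall>t\<ge>0. (\<lambda>\<theta>. u (t + \<theta>)) \<in> inputs_B \<tau> U) \<and>
     e 0 = e0 \<and>
     (\<forall>t\<ge>0. (e has_vector_derivative ed t) (at t within {0..})) \<and>
     continuous_on {0..} ed \<and>
     (\<forall>t\<ge>0. e t \<in> E \<and> ed t \<in> Ecal) \<and>
     (\<forall>t\<ge>0. \<forall>vt\<in>{0..\<tau>}. e (t + vt) = \<Gamma> vt (e t) \<and> ed (t + vt) = \<Gamma>d vt (e t) (ed t)) \<and>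
     (\<forall>t\<ge>0. u t = K (Psi X f g \<tau> \<tau> (x t) (\<lambda>\<theta>. u (t + \<theta>))) (\<Gamma> \<tau> (e t)) (\<Gamma>d \<tau> (e t) (ed t)))"

end

theory Submission
  imports Defs
begin

text \<open>Along a closed-loop solution the predictor is exact: the shifted trajectory
  \<open>s \<mapsto> x(t + s)\<close> solves the open-loop system driven by the history \<open>u\<^sub>t\<close>, so
  \<open>\<Psi>(\<tau>, x(t), u\<^sub>t) = x(t + \<tau>)\<close> and the controller applied at time \<open>t\<close> acts on the true state at
  time \<open>t + \<tau>\<close>. Hence \<open>h(t) = H(x(t), e(t))\<close> satisfies \<open>h'(t) \<ge> -\<alpha>(h(t))\<close> whenever
  \<open>t > \<tau>\<close> and \<open>h(t - \<tau>) \<ge> 0\<close>, while Assumption 2 gives \<open>h \<ge> 0\<close> on \<open>[0, \<tau>]\<close>.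
  If \<open>h\<close> ever became negative, let \<open>t\<^sub>1 \<ge> \<tau>\<close> be the first exit time. Shortly after \<open>t\<^sub>1\<close> the
  delayed values are still nonnegative and \<open>h\<close> is negative but above the left end \<open>-a\<close> of the domain of \<open>\<alpha>\<close>, so there
  \<open>h' \<ge> -\<alpha>(h) > 0\<close>; then \<open>h\<close> cannot attain its minimum over \<open>[t\<^sub>1, t\<^sub>2]\<close> to the right of
  \<open>t\<^sub>1\<close>, a contradiction.\<close>

lemma locally_lipschitz_on_imp_continuous_on:
  assumes "locally_lipschitz_on S F"
  shows "continuous_on S F"
  unfolding continuous_on_eq_continuous_within
proof
  fix z assume "z \<in> S"
  then obtain r L where r: "r > 0"
    and L: "\<forall>y1\<in>ball z r \<inter> S. \<forall>y2\<in>ball z r \<inter> S. dist (F y1) (F y2) \<le> L * dist y1 y2"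
    using assms unfolding locally_lipschitz_on_def by blast
  have "(max L 0)-lipschitz_on (ball z r \<inter> S) F"
  proof (rule lipschitz_onI)
    fix y1 y2 assume "y1 \<in> ball z r \<inter> S" "y2 \<in> ball z r \<inter> S"
    then have "dist (F y1) (F y2) \<le> L * dist y1 y2"
      using L by blast
    also have "\<dots> \<le> max L 0 * dist y1 y2"
      by (intro mult_right_mono) auto
    finally show "dist (F y1) (F y2) \<le> max L 0 * dist y1 y2" .
  qed simp
  then have "continuous_on (ball z r \<inter> S) F"
    by (rule lipschitz_on_continuous_on)
  moreover have "z \<in> ball z r \<inter> S"
    using r \<open>z \<in> S\<close> by simp
  ultimately have "continuous (at z within ball z r \<inter> S) F"
    using continuous_on_eq_continuous_within by blast
  moreover have "at z within ball z r \<inter> S = at z within S"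
    by (rule at_within_nhd[of _ "ball z r"]) (use r in auto)
  ultimately show "continuous (at z within S) F"
    by simp
qed

lemma continuous_on_matrix_vector_mult [continuous_intros]:
  fixes A :: "'a::topological_space \<Rightarrow> real^'m^'n" and v :: "'a \<Rightarrow> real^'m"
  assumes "continuous_on S A" "continuous_on S v"
  shows "continuous_on S (\<lambda>s. A s *v v s)"
  unfolding matrix_vector_mult_def using assms by (intro continuous_intros) auto

lemma continuous_on_atLeast_if_atLeastAtMost:
  fixes h :: "real \<Rightarrow> 'a::topological_space"
  assumes "\<And>B. continuous_on {a..B} h"
  shows "continuous_on {a..} h"
  unfolding continuous_on_eq_continuous_within
proof
  fix t assume "t \<in> {a..}"
  then have "continuous (at t within {a..t+1}) h"
    using assms[of "t+1"] by (simp add: continuous_on_eq_continuous_within)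
  moreover have "at t within {a..t+1} = at t within {a..}"
    by (rule at_within_nhd[of _ "{..<t+1}"]) auto
  ultimately show "continuous (at t within {a..}) h"
    by simp
qed

lemma has_vector_derivative_indefinite_integral:
  fixes F :: "real \<Rightarrow> 'a::banach"
  assumes y: "\<And>s. s \<ge> 0 \<Longrightarrow> y s = y0 + integral {0..s} F"
    and int: "F integrable_on {0..m+1}" and cont: "isCont F m" and m: "m > 0"
  shows "(y has_vector_derivative F m) (at m)"
proof -
  have "((\<lambda>r. integral {0..r} F) has_vector_derivative F m) (at m within {0..m+1})"
    using integral_has_vector_derivative_continuous_at[of F 0 "m+1" m "{}"] int cont m
    by (auto intro: continuous_at_imp_continuous_within)
  then have "((\<lambda>r. y0 + integral {0..r} F) has_vector_derivative F m) (at m)"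
    using at_within_interior[of m "{0..m+1}"] m by (auto intro: derivative_eq_intros)
  then show ?thesis
    by (rule has_vector_derivative_transform_within_open[of _ _ _ "{0<..}"]) (use m y in auto)
qed

lemma has_real_derivative_compose_pair:
  fixes x :: "real \<Rightarrow> 'a::real_inner" and e :: "real \<Rightarrow> 'b::real_inner"
  assumes H: "((\<lambda>p. H (fst p) (snd p)) has_derivative (\<lambda>(dx, de). a \<bullet> dx + b \<bullet> de)) (at (x m, e m))"
    and x: "(x has_vector_derivative v) (at m)" and e: "(e has_vector_derivative w) (at m)"
  shows "((\<lambda>t. H (x t) (e t)) has_real_derivative a \<bullet> v + b \<bullet> w) (at m)"
proof -
  have "((\<lambda>t. (x t, e t)) has_derivative (\<lambda>d. (d *\<^sub>R v, d *\<^sub>R w))) (at m)"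
    using x e unfolding has_vector_derivative_def by (rule has_derivative_Pair)
  from diff_chain_at[OF this H]
  have "((\<lambda>t. H (x t) (e t)) has_derivative (\<lambda>d. a \<bullet> (d *\<^sub>R v) + b \<bullet> (d *\<^sub>R w))) (at m)"
    by (simp add: o_def)
  then show ?thesis
    unfolding has_field_derivative_def
    by (rule has_derivative_eq_rhs) (auto simp: fun_eq_iff algebra_simps)
qed

lemma has_real_derivative_pos_left_smaller:
  fixes h :: "real \<Rightarrow> real"
  assumes "(h has_real_derivative D) (at m)" "D > 0" "t < m"
  shows "\<exists>s\<in>{t..<m}. h s < h m"
proof -
  obtain k where k: "k > 0" and left: "\<And>r. r > 0 \<Longrightarrow> r < k \<Longrightarrow> h (m - r) < h m"
    using DERIV_pos_inc_left[OF assms(1,2)] by blast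
  define r where "r = min (k/2) ((m - t)/2)"
  have "r > 0" "r < k"
    using k assms(3) by (auto simp: r_def)
  moreover have "r \<le> (m - t)/2"
    unfolding r_def by (rule min.cobounded2)
  ultimately show ?thesis
    using left by (intro bexI[of _ "m - r"]) auto
qed

lemma ext_class_K_neg:
  assumes "ext_class_K a b \<alpha>" "-a < y" "y < 0"
  shows "\<alpha> y < 0"
  using assms strict_mono_onD[of "{-a<..<b}" \<alpha> y 0] by (auto simp: ext_class_K_def)

lemma delayed_barrier_nonneg:
  fixes h \<alpha> :: "real \<Rightarrow> real"
  assumes \<tau>: "\<tau> > 0" and \<alpha>: "ext_class_K a b \<alpha>"
    and cont: "continuous_on {0..} h"
    and init: "\<And>t. t \<in> {0..\<tau>} \<Longrightarrow> h t \<ge> 0"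
    and rate: "\<And>m. m > \<tau> \<Longrightarrow> h (m - \<tau>) \<ge> 0 \<Longrightarrow> \<exists>D. (h has_real_derivative D) (at m) \<and> D \<ge> - \<alpha> (h m)"
    and t: "t \<ge> 0"
  shows "h t \<ge> 0"
proof (rule ccontr)
  assume "\<not> h t \<ge> 0"
  define T where "T = {s. s \<ge> 0 \<and> h s < 0}"
  define t1 where "t1 = Inf T"
  have "t \<in> T"
    using t \<open>\<not> h t \<ge> 0\<close> by (simp add: T_def)
  have bdd: "bdd_below T"
    by (auto simp: T_def intro!: bdd_belowI[of _ 0])
  have before: "h s \<ge> 0" if "0 \<le> s" "s < t1" for s
    using cInf_lower[OF _ bdd, of s] that by (force simp: T_def t1_def)
  have t1\<tau>: "t1 \<ge> \<tau>"
    unfolding t1_def using \<open>t \<in> T\<close> init by (intro cInf_greatest) (force simp: T_def)+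
  have "h t1 \<ge> 0"
  proof (rule continuous_ge_on_closure[of "{0..<t1}" h])
    have "closure {0..<t1} = {0..t1}"
      using t1\<tau> \<tau> by simp
    moreover have "continuous_on {0..t1} h"
      using cont by (rule continuous_on_subset) auto
    ultimately show "continuous_on (closure {0..<t1}) h"
      by simp
    show "t1 \<in> closure {0..<t1}"
      using \<open>closure {0..<t1} = {0..t1}\<close> t1\<tau> \<tau> by simp
  qed (use before in auto)
  have "a > 0"
    using \<alpha> by (simp add: ext_class_K_def)
  then obtain d where "d > 0" and near: "\<And>s. s \<ge> 0 \<Longrightarrow> dist s t1 < d \<Longrightarrow> dist (h s) (h t1) < a"
    using cont t1\<tau> \<tau> unfolding continuous_on_iff by (metis atLeast_iff order.trans less_imp_le)
  \<comment> \<open>Staying within \<open>\<tau>\<close> of \<open>t1\<close> keeps all delayed times \<open>m - \<tau>\<close> before the exit time.\<close>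
  obtain t2 where "t2 \<in> T" "t2 < t1 + min d \<tau>"
    using cInf_less_iff[OF _ bdd, of "t1 + min d \<tau>"] \<open>t \<in> T\<close> \<open>d > 0\<close> \<tau> unfolding t1_def by force
  then have "t2 < t1 + d" "t2 < t1 + \<tau>"
    by auto
  have "t1 \<le> t2"
    unfolding t1_def using \<open>t2 \<in> T\<close> bdd by (rule cInf_lower)
  obtain m where m: "m \<in> {t1..t2}" and min: "\<And>s. s \<in> {t1..t2} \<Longrightarrow> h m \<le> h s"
    using continuous_attains_inf[of "{t1..t2}" h] continuous_on_subset[OF cont, of "{t1..t2}"]
      \<open>t1 \<le> t2\<close> t1\<tau> \<tau> by auto
  have "h m < 0"
    using min[of t2] \<open>t1 \<le> t2\<close> \<open>t2 \<in> T\<close> by (auto simp: T_def)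
  then have "t1 < m"
    using m \<open>h t1 \<ge> 0\<close> by (cases "m = t1") auto
  have "h m > - a"
    using near[of m] m \<open>t2 < t1 + d\<close> t1\<tau> \<tau> \<open>h t1 \<ge> 0\<close> by (auto simp: dist_real_def)
  obtain D where D: "(h has_real_derivative D) (at m)" and "D \<ge> - \<alpha> (h m)"
    using rate[of m] before[of "m - \<tau>"] m \<open>t1 < m\<close> t1\<tau> \<open>t2 < t1 + \<tau>\<close> by auto
  moreover have "\<alpha> (h m) < 0"
    using ext_class_K_neg[OF \<alpha> \<open>h m > - a\<close> \<open>h m < 0\<close>] .
  ultimately obtain s where "s \<in> {t1..<m}" "h s < h m"
    using has_real_derivative_pos_left_smaller[OF D _ \<open>t1 < m\<close>] by auto
  then show False
    using min[of s] m by auto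
qed

lemma Psi_eqI:
  assumes "open_loop_wellposed X U f g \<tau>" "x \<in> X" "w \<in> inputs_B \<tau> U"
    and "open_loop_sol X f g \<tau> x w \<xi>" "\<theta> \<in> {0..\<tau>}"
  shows "Psi X f g \<tau> \<theta> x w = \<xi> \<theta>"
  unfolding Psi_def
proof (rule the_equality)
  show "\<exists>\<xi>'. open_loop_sol X f g \<tau> x w \<xi>' \<and> \<xi>' \<theta> = \<xi> \<theta>"
    using assms by blast
next
  fix y assume "\<exists>\<xi>'. open_loop_sol X f g \<tau> x w \<xi>' \<and> \<xi>' \<theta> = y"
  then show "y = \<xi> \<theta>"
    using assms unfolding open_loop_wellposed_def by metis
qed

lemma
  assumes "closed_loop_sol X U E Ecal f g \<tau> \<Gamma> \<Gamma>d K x0 e0 u0 x u e ed"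
  shows closed_loop_sol_history: "\<theta> \<in> {-\<tau>..<0} \<Longrightarrow> u \<theta> = u0 \<theta>"
    and closed_loop_sol_state: "t \<ge> 0 \<Longrightarrow> x t \<in> X"
    and closed_loop_sol_integral:
      "t \<ge> 0 \<Longrightarrow> ((\<lambda>s. f (x s) + g (x s) *v u (s - \<tau>)) has_integral (x t - x0)) {0..t}"
    and closed_loop_sol_input: "t \<ge> 0 \<Longrightarrow> (\<lambda>\<theta>. u (t + \<theta>)) \<in> inputs_B \<tau> U"
    and closed_loop_sol_env_init: "e 0 = e0"
    and closed_loop_sol_env_deriv: "t \<ge> 0 \<Longrightarrow> (e has_vector_derivative ed t) (at t within {0..})"
    and closed_loop_sol_env_deriv_continuous: "continuous_on {0..} ed"
    and closed_loop_sol_env: "t \<ge> 0 \<Longrightarrow> e t \<in> E" "t \<ge> 0 \<Longrightarrow> ed t \<in> Ecal"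
    and closed_loop_sol_env_future: "t \<ge> 0 \<Longrightarrow> \<theta> \<in> {0..\<tau>} \<Longrightarrow> e (t + \<theta>) = \<Gamma> \<theta> (e t)"
      "t \<ge> 0 \<Longrightarrow> \<theta> \<in> {0..\<tau>} \<Longrightarrow> ed (t + \<theta>) = \<Gamma>d \<theta> (e t) (ed t)"
    and closed_loop_sol_control:
      "t \<ge> 0 \<Longrightarrow> u t = K (Psi X f g \<tau> \<tau> (x t) (\<lambda>\<theta>. u (t + \<theta>))) (\<Gamma> \<tau> (e t)) (\<Gamma>d \<tau> (e t) (ed t))"
  using assms unfolding closed_loop_sol_def by blast+

lemma closed_loop_state_eq_integral:
  assumes "closed_loop_sol X U E Ecal f g \<tau> \<Gamma> \<Gamma>d K x0 e0 u0 x u e ed" "s \<ge> 0"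
  shows "x s = x0 + integral {0..s} (\<lambda>r. f (x r) + g (x r) *v u (r - \<tau>))"
  using integral_unique[OF closed_loop_sol_integral[OF assms]] by simp

lemma closed_loop_field_integrable:
  assumes "closed_loop_sol X U E Ecal f g \<tau> \<Gamma> \<Gamma>d K x0 e0 u0 x u e ed" "s \<ge> 0"
  shows "(\<lambda>r. f (x r) + g (x r) *v u (r - \<tau>)) integrable_on {0..s}"
  using closed_loop_sol_integral[OF assms] unfolding integrable_on_def by blast

lemma closed_loop_state_continuous:
  assumes sol: "closed_loop_sol X U E Ecal f g \<tau> \<Gamma> \<Gamma>d K x0 e0 u0 x u e ed"
  shows "continuous_on {0..} x"
proof (rule continuous_on_atLeast_if_atLeastAtMost)
  fix B :: real
  show "continuous_on {0..B} x"
  proof (cases "B \<ge> 0")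
    case True
    have "continuous_on {0..B} (\<lambda>s. x0 + integral {0..s} (\<lambda>r. f (x r) + g (x r) *v u (r - \<tau>)))"
      using closed_loop_field_integrable[OF sol True]
      by (intro continuous_intros indefinite_integral_continuous_1)
    then show ?thesis
      by (rule continuous_on_eq) (simp add: closed_loop_state_eq_integral[OF sol])
  qed simp
qed

lemma closed_loop_env_continuous:
  assumes "closed_loop_sol X U E Ecal f g \<tau> \<Gamma> \<Gamma>d K x0 e0 u0 x u e ed"
  shows "continuous_on {0..} e"
  unfolding continuous_on_eq_continuous_within
  using closed_loop_sol_env_deriv[OF assms] has_vector_derivative_continuous by blast

lemma closed_loop_env_has_derivative:
  assumes "closed_loop_sol X U E Ecal f g \<tau> \<Gamma> \<Gamma>d K x0 e0 u0 x u e ed" "m > 0"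
  shows "(e has_vector_derivative ed m) (at m)"
  using closed_loop_sol_env_deriv[OF assms(1), of m] at_within_interior[of m "{0..}"] assms(2)
  by simp

lemma closed_loop_shift_open_loop_sol:
  assumes sol: "closed_loop_sol X U E Ecal f g \<tau> \<Gamma> \<Gamma>d K x0 e0 u0 x u e ed" and t: "t \<ge> 0"
  shows "open_loop_sol X f g \<tau> (x t) (\<lambda>\<theta>. u (t + \<theta>)) (\<lambda>s. x (t + s))"
  unfolding open_loop_sol_def
proof
  let ?F = "\<lambda>r. f (x r) + g (x r) *v u (r - \<tau>)"
  fix s assume s: "s \<in> {0..\<tau>}"
  have int: "?F integrable_on {0..t + s}"
    using closed_loop_field_integrable[OF sol] t s by simp
  have "integral {0..t} ?F + integral {t..t + s} ?F = integral {0..t + s} ?F"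
    by (rule Henstock_Kurzweil_Integration.integral_combine[OF _ _ int]) (use t s in auto)
  then have "integral {t..t + s} ?F = x (t + s) - x t"
    using closed_loop_state_eq_integral[OF sol, of t] closed_loop_state_eq_integral[OF sol, of "t + s"] t s
    by (simp add: algebra_simps)
  then have "(?F has_integral (x (t + s) - x t)) {t..t + s}"
    using integrable_subinterval_real[OF int, of t "t + s"] t s by (simp add: has_integral_integral)
  from has_integral_shift_real_ivl[OF this, of t]
  have "((\<lambda>\<phi>. f (x (t + \<phi>)) + g (x (t + \<phi>)) *v u (t + (\<phi> - \<tau>))) has_integral (x (t + s) - x t)) {0..s}"
    by (simp add: algebra_simps)
  moreover have "x (t + s) \<in> X"
    using closed_loop_sol_state[OF sol] t s by simp
  ultimately show "x (t + s) \<in> X \<and> ((\<lambda>\<phi>. f (x (t + \<phi>)) + g (x (t + \<phi>)) *v u (t + (\<phi> - \<tau>))) has_integral (x (t + s) - x t)) {0..s}"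
    by simp
qed

lemma closed_loop_predictor_exact:
  assumes sol: "closed_loop_sol X U E Ecal f g \<tau> \<Gamma> \<Gamma>d K x0 e0 u0 x u e ed" and wp: "open_loop_wellposed X U f g \<tau>" and "\<tau> \<ge> 0" "t \<ge> 0"
  shows "Psi X f g \<tau> \<tau> (x t) (\<lambda>\<theta>. u (t + \<theta>)) = x (t + \<tau>)"
  using Psi_eqI[OF wp closed_loop_sol_state[OF sol] closed_loop_sol_input[OF sol]
      closed_loop_shift_open_loop_sol[OF sol]] assms(3,4)
  by simp

lemma closed_loop_control_eq:
  assumes sol: "closed_loop_sol X U E Ecal f g \<tau> \<Gamma> \<Gamma>d K x0 e0 u0 x u e ed" and wp: "open_loop_wellposed X U f g \<tau>" and "\<tau> \<ge> 0" "t \<ge> 0"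
  shows "u t = K (x (t + \<tau>)) (e (t + \<tau>)) (ed (t + \<tau>))"
  using closed_loop_sol_control[OF sol] closed_loop_predictor_exact[OF sol wp]
    closed_loop_sol_env_future[OF sol] assms(3,4)
  by simp

lemma closed_loop_initial_open_loop_sol:
  assumes sol: "closed_loop_sol X U E Ecal f g \<tau> \<Gamma> \<Gamma>d K x0 e0 u0 x u e ed"
  shows "open_loop_sol X f g \<tau> x0 u0 x"
  unfolding open_loop_sol_def
proof
  fix s assume s: "s \<in> {0..\<tau>}"
  have "((\<lambda>r. f (x r) + g (x r) *v u (r - \<tau>)) has_integral (x s - x0)) {0..s}"
    using closed_loop_sol_integral[OF sol] s by simp
  then have "((\<lambda>r. f (x r) + g (x r) *v u0 (r - \<tau>)) has_integral (x s - x0)) {0..s}"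
    by (rule has_integral_spike_finite[where S = "{\<tau>}", rotated 2]) (use closed_loop_sol_history[OF sol] s in auto)
  then show "x s \<in> X \<and> ((\<lambda>r. f (x r) + g (x r) *v u0 (r - \<tau>)) has_integral (x s - x0)) {0..s}"
    using closed_loop_sol_state[OF sol] s by simp
qed

lemma closed_loop_safe_initially:
  assumes sol: "closed_loop_sol X U E Ecal f g \<tau> \<Gamma> \<Gamma>d K x0 e0 u0 x u e ed" and wp: "open_loop_wellposed X U f g \<tau>"
    and "x0 \<in> X" "u0 \<in> inputs_B \<tau> U"
    and safe: "\<forall>\<theta>\<in>{0..\<tau>}. (Psi X f g \<tau> \<theta> x0 u0, \<Gamma> \<theta> e0) \<in> safe_set X E H"
    and t: "t \<in> {0..\<tau>}"
  shows "(x t, e t) \<in> safe_set X E H"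
  using safe[rule_format, OF t] Psi_eqI[OF wp assms(3,4) closed_loop_initial_open_loop_sol[OF sol] t]
    closed_loop_sol_env_future(1)[OF sol, of 0 t] closed_loop_sol_env_init[OF sol] t
  by simp

lemma closed_loop_state_has_derivative:
  assumes sol: "closed_loop_sol X U E Ecal f g \<tau> \<Gamma> \<Gamma>d K x0 e0 u0 x u e ed" and wp: "open_loop_wellposed X U f g \<tau>" and \<tau>: "\<tau> \<ge> 0" and m: "m > \<tau>"
    and f: "continuous_on X f" and g: "continuous_on X g"
    and K: "continuous_on (X \<times> E \<times> Ecal) (\<lambda>(a, b, c). K a b c)"
  shows "(x has_vector_derivative f (x m) + g (x m) *v u (m - \<tau>)) (at m)"
proof (rule has_vector_derivative_indefinite_integral)
  let ?F = "\<lambda>r. f (x r) + g (x r) *v u (r - \<tau>)"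
  have sub: "{\<tau><..} \<subseteq> {0..}"
    using \<tau> by auto
  have x: "continuous_on {\<tau><..} x" "x ` {\<tau><..} \<subseteq> X"
    using continuous_on_subset[OF closed_loop_state_continuous[OF sol] sub]
      closed_loop_sol_state[OF sol] \<tau> by auto
  have "continuous_on {\<tau><..} (\<lambda>r. (x r, e r, ed r))"
    using continuous_on_subset[OF closed_loop_env_continuous[OF sol] sub]
      continuous_on_subset[OF closed_loop_sol_env_deriv_continuous[OF sol] sub] x
    by (intro continuous_intros)
  moreover have "(\<lambda>r. (x r, e r, ed r)) ` {\<tau><..} \<subseteq> X \<times> E \<times> Ecal"
    using closed_loop_sol_state[OF sol] closed_loop_sol_env[OF sol] \<tau> by auto
  ultimately have "continuous_on {\<tau><..} (\<lambda>r. K (x r) (e r) (ed r))"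
    using continuous_on_compose2[OF K] by fastforce
  then have "continuous_on {\<tau><..} (\<lambda>r. f (x r) + g (x r) *v K (x r) (e r) (ed r))"
    using continuous_on_compose2[OF f x] continuous_on_compose2[OF g x]
    by (intro continuous_intros)
  then have "continuous_on {\<tau><..} ?F"
    by (rule continuous_on_eq) (use closed_loop_control_eq[OF sol wp \<tau>] in auto)
  then show "isCont ?F m"
    using m by (simp add: continuous_on_eq_continuous_at)
  show "x s = x0 + integral {0..s} ?F" if "s \<ge> 0" for s
    using closed_loop_state_eq_integral[OF sol that] .
  show "?F integrable_on {0..m + 1}" "m > 0"
    using closed_loop_field_integrable[OF sol] m \<tau> by auto
qed

lemma closed_loop_barrier_continuous:
  assumes sol: "closed_loop_sol X U E Ecal f g \<tau> \<Gamma> \<Gamma>d K x0 e0 u0 x u e ed" and H: "continuous_on (X \<times> E) (\<lambda>p. H (fst p) (snd p))"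
  shows "continuous_on {0..} (\<lambda>t. H (x t) (e t))"
proof -
  have "continuous_on {0..} (\<lambda>t. (x t, e t))"
    using closed_loop_state_continuous[OF sol] closed_loop_env_continuous[OF sol] by (intro continuous_intros)
  then show ?thesis
    using continuous_on_compose2[OF H] closed_loop_sol_state[OF sol] closed_loop_sol_env(1)[OF sol] by fastforce
qed

lemma closed_loop_barrier_has_derivative:
  assumes sol: "closed_loop_sol X U E Ecal f g \<tau> \<Gamma> \<Gamma>d K x0 e0 u0 x u e ed" and wp: "open_loop_wellposed X U f g \<tau>" and \<tau>: "\<tau> \<ge> 0" and m: "m > \<tau>"
    and f: "continuous_on X f" and g: "continuous_on X g"
    and K: "continuous_on (X \<times> E \<times> Ecal) (\<lambda>(a, b, c). K a b c)"
    and H: "\<forall>x'\<in>X. \<forall>e'\<in>E. ((\<lambda>p. H (fst p) (snd p)) has_derivative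
              (\<lambda>(dx, de). Hx x' e' \<bullet> dx + He x' e' \<bullet> de)) (at (x', e'))"
  shows "((\<lambda>t. H (x t) (e t)) has_real_derivative Hdot Hx He f g (x m) (e m) (ed m) (u (m - \<tau>))) (at m)"
  unfolding Hdot_def
proof (rule has_real_derivative_compose_pair)
  show "((\<lambda>p. H (fst p) (snd p)) has_derivative (\<lambda>(dx, de). Hx (x m) (e m) \<bullet> dx + He (x m) (e m) \<bullet> de))
      (at (x m, e m))"
    using H closed_loop_sol_state[OF sol] closed_loop_sol_env(1)[OF sol] \<tau> m by simp
  show "(x has_vector_derivative f (x m) + g (x m) *v u (m - \<tau>)) (at m)"
    by (rule closed_loop_state_has_derivative[OF sol wp \<tau> m f g K])
  show "(e has_vector_derivative ed m) (at m)"
    using closed_loop_env_has_derivative[OF sol] \<tau> m by simp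
qed

lemma closed_loop_barrier_condition:
  assumes sol: "closed_loop_sol X U E Ecal f g \<tau> \<Gamma> \<Gamma>d K x0 e0 u0 x u e ed" and wp: "open_loop_wellposed X U f g \<tau>" and \<tau>: "\<tau> \<ge> 0" and s: "s \<ge> 0"
    and K_cond: "\<forall>(x', e')\<in>safe_set X E H. \<forall>ed'\<in>Ecal. \<forall>w\<in>inputs_B \<tau> U.
                   (let xp = Psi X f g \<tau> \<tau> x' w; ep = \<Gamma> \<tau> e'; edp = \<Gamma>d \<tau> e' ed'
                    in Hdot Hx He f g xp ep edp (K xp ep edp) \<ge> - \<alpha> (H xp ep))"
    and safe: "(x s, e s) \<in> safe_set X E H"
  shows "Hdot Hx He f g (x (s + \<tau>)) (e (s + \<tau>)) (ed (s + \<tau>)) (u s) \<ge> - \<alpha> (H (x (s + \<tau>)) (e (s + \<tau>)))"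
proof -
  have "\<forall>ed'\<in>Ecal. \<forall>w\<in>inputs_B \<tau> U.
          (let xp = Psi X f g \<tau> \<tau> (x s) w; ep = \<Gamma> \<tau> (e s); edp = \<Gamma>d \<tau> (e s) ed'
           in Hdot Hx He f g xp ep edp (K xp ep edp) \<ge> - \<alpha> (H xp ep))"
    using bspec[OF K_cond safe] by simp
  then have "let xp = Psi X f g \<tau> \<tau> (x s) (\<lambda>\<theta>. u (s + \<theta>)); ep = \<Gamma> \<tau> (e s); edp = \<Gamma>d \<tau> (e s) (ed s)
           in Hdot Hx He f g xp ep edp (K xp ep edp) \<ge> - \<alpha> (H xp ep)"
    using closed_loop_sol_env(2)[OF sol s] closed_loop_sol_input[OF sol s] by blast
  moreover have "Psi X f g \<tau> \<tau> (x s) (\<lambda>\<theta>. u (s + \<theta>)) = x (s + \<tau>)"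
    "\<Gamma> \<tau> (e s) = e (s + \<tau>)" "\<Gamma>d \<tau> (e s) (ed s) = ed (s + \<tau>)"
    using closed_loop_predictor_exact[OF sol wp \<tau> s] closed_loop_sol_env_future[OF sol s] \<tau> by auto
  ultimately show ?thesis
    using closed_loop_control_eq[OF sol wp \<tau> s] by (simp add: Let_def)
qed

theorem theorem4:
  fixes X :: "(real^'n) set" and U :: "(real^'m) set" and E Ecal :: "(real^'l) set"
    and f :: "real^'n \<Rightarrow> real^'n" and g :: "real^'n \<Rightarrow> real^'m^'n" and \<tau> :: real
    and \<Gamma> :: "real \<Rightarrow> real^'l \<Rightarrow> real^'l" and \<Gamma>d :: "real \<Rightarrow> real^'l \<Rightarrow> real^'l \<Rightarrow> real^'l"
    and H :: "real^'n \<Rightarrow> real^'l \<Rightarrow> real"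
    and Hx :: "real^'n \<Rightarrow> real^'l \<Rightarrow> real^'n" and He :: "real^'n \<Rightarrow> real^'l \<Rightarrow> real^'l"
    and \<alpha> :: "real \<Rightarrow> real"
    and K :: "real^'n \<Rightarrow> real^'l \<Rightarrow> real^'l \<Rightarrow> real^'m"
    and x0 :: "real^'n" and e0 :: "real^'l" and u0 :: "real \<Rightarrow> real^'m"
    and x :: "real \<Rightarrow> real^'n" and u :: "real \<Rightarrow> real^'m"
    and e ed :: "real \<Rightarrow> real^'l"
  assumes tau_pos: "\<tau> > 0"
    and X_open: "open X" and X_conn: "connected X"
    and f_lip: "locally_lipschitz_on X f" and g_lip: "locally_lipschitz_on X g"
    and wellposed: "open_loop_wellposed X U f g \<tau>"
    and Gamma_E: "\<forall>vt\<in>{0..\<tau>}. \<forall>e'\<in>E. \<Gamma> vt e' \<in> E"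
    and Gammad_E: "\<forall>vt\<in>{0..\<tau>}. \<forall>e'\<in>E. \<forall>ed'\<in>Ecal. \<Gamma>d vt e' ed' \<in> Ecal"
    and H_deriv: "\<forall>x'\<in>X. \<forall>e'\<in>E. ((\<lambda>p. H (fst p) (snd p)) has_derivative
                     (\<lambda>(dx, de). Hx x' e' \<bullet> dx + He x' e' \<bullet> de)) (at (x', e'))"
    and Hx_cont: "continuous_on (X \<times> E) (\<lambda>p. Hx (fst p) (snd p))"
    and He_cont: "continuous_on (X \<times> E) (\<lambda>p. He (fst p) (snd p))"
    and ECBF: "is_ECBF X U E Ecal f g \<tau> \<Gamma> \<Gamma>d H Hx He \<alpha>"
    and u0_B: "u0 \<in> inputs_B \<tau> U"
    and assumption2: "\<forall>vt\<in>{0..\<tau>}. (Psi X f g \<tau> vt x0 u0, \<Gamma> vt e0) \<in> safe_set X E H"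
    and K_lip: "locally_lipschitz_on (X \<times> E \<times> Ecal) (\<lambda>(a, b, c). K a b c)"
    and K_U: "\<forall>a\<in>X. \<forall>b\<in>E. \<forall>c\<in>Ecal. K a b c \<in> U"
    and K_cond: "\<forall>(x', e')\<in>safe_set X E H. \<forall>ed'\<in>Ecal. \<forall>w\<in>inputs_B \<tau> U.
                   (let xp = Psi X f g \<tau> \<tau> x' w; ep = \<Gamma> \<tau> e'; edp = \<Gamma>d \<tau> e' ed'
                    in Hdot Hx He f g xp ep edp (K xp ep edp) \<ge> - \<alpha> (H xp ep))"
    and sol: "closed_loop_sol X U E Ecal f g \<tau> \<Gamma> \<Gamma>d K x0 e0 u0 x u e ed"
    and init: "(x0, e0) \<in> safe_set X E H"
  shows "\<forall>t\<ge>0. (x t, e t) \<in> safe_set X E H"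
proof -
  obtain a b where \<alpha>: "ext_class_K a b \<alpha>"
    using ECBF unfolding is_ECBF_def by blast
  have \<tau>: "\<tau> \<ge> 0"
    using tau_pos by simp
  have safe_iff: "(x t, e t) \<in> safe_set X E H \<longleftrightarrow> H (x t) (e t) \<ge> 0" if "t \<ge> 0" for t
    using closed_loop_sol_state[OF sol that] closed_loop_sol_env(1)[OF sol that] by (simp add: safe_set_def)
  have "H (x t) (e t) \<ge> 0" if "t \<ge> 0" for t
  proof (rule delayed_barrier_nonneg[OF tau_pos \<alpha> _ _ _ that])
    have "continuous_on (X \<times> E) (\<lambda>p. H (fst p) (snd p))"
      using H_deriv by (auto intro!: continuous_at_imp_continuous_on has_derivative_continuous)
    then show "continuous_on {0..} (\<lambda>t. H (x t) (e t))"
      by (rule closed_loop_barrier_continuous[OF sol])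
    show "H (x t) (e t) \<ge> 0" if "t \<in> {0..\<tau>}" for t
      using closed_loop_safe_initially[OF sol wellposed _ u0_B assumption2 that] init safe_iff[of t] that
      by (simp add: safe_set_def)
    show "\<exists>D. ((\<lambda>t. H (x t) (e t)) has_real_derivative D) (at m) \<and> D \<ge> - \<alpha> (H (x m) (e m))"
      if "m > \<tau>" "H (x (m - \<tau>)) (e (m - \<tau>)) \<ge> 0" for m
      using closed_loop_barrier_has_derivative[OF sol wellposed \<tau> \<open>m > \<tau>\<close>
          locally_lipschitz_on_imp_continuous_on[OF f_lip] locally_lipschitz_on_imp_continuous_on[OF g_lip]
          locally_lipschitz_on_imp_continuous_on[OF K_lip] H_deriv]
        closed_loop_barrier_condition[OF sol wellposed \<tau> _ K_cond, of "m - \<tau>"] safe_iff[of "m - \<tau>"] that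
      by auto
  qed
  then show ?thesis
    using safe_iff by blast
qed

end
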